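(* Assume $\bm\lambda\neq0$ and $\bm\mu\neq0$. Then $M_1(\bm\lambda,\bm\mu)$ is a cyclic (generated by $w$) but reducible $\widehat{\mathfrak{gl}}$-module, i.e. there is a nonzero proper subspace of $M_1(\bm\lambda,\bm\mu)$ invariant under all $E_{i,j}$.
   Context: Let $\widehat{\mathcal A}$ be the Weyl algebra: the unital associative complex algebra generated by $a(r),a^*(r)$ ($r\in\mathbb Z$) with relations $[a(r),a(s)]=[a^*(r),a^*(s)]=0$ and $[a(r),a^*(s)]=\delta_{r+s,0}$. Fix integers $n\ge 0$, $m\ge 1$, $\bm\lambda=(\lambda_0,\dots,\lambda_n)\in\mathbb C^{n+1}$, $\bm\mu=(\mu_1,\dots,\mu_m)\in\mathbb C^m$, and set $\lambda_i=0$ for $i>n$, $\mu_j=0$ for $j>m$. The Whittaker module $M_1(\bm\lambda,\bm\mu)=\widehat{\mathcal A}/\mathcal I$, where $\mathcal I$ is the left ideal generated by $a(i)-\lambda_i$ ($i\ge 0$) and $a^*(j)-\mu_j$ ($j\ge 1$); $w=w_{\bm\lambda,\bm\mu}$ denotes the image of $1$. Normal ordering: $:a(i)a^*(j):$ equals $a^*(j)a(i)$ if $i\ge 0$ and $j\le 0$, and equals $a(i)a^*(j)$ otherwise. For $i,j\in\mathbb Z$, $E_{i,j}:=\,:a(-i)a^*(j):$, an operator on $M_1(\bm\lambda,\bm\mu)$; these give $M_1(\bm\lambda,\bm\mu)$ the structure of a $\widehat{\mathfrak{gl}}$-module of central charge $-1$, and submodules/generation refer to invariance under all $E_{i,j}$.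 *)

theory Defs
  imports Main "HOL.Complex"
begin

text \<open>
  Literal model of the Whittaker module M_1(lambda,mu) = W / I, where W is the Weyl
  algebra = (free algebra on the generators a(r), a*(r)) / (two-sided ideal J of the
  commutation relations).  Pulling back to the free algebra F, we have
  M_1 = F / L where L = J + (left ideal of F generated by a(i) - lambda_i (i >= 0)
  and a*(j) - mu_j (j >= 1)).  Elements of F are finitely supported functions
  from words in the generators to complex coefficients.  A subspace of M_1 is the
  same as a subspace V of F with L \<subseteq> V.
\<close>

datatype gen = A int | As int   \<comment> \<open>A r = a(r), As r = a*(r)\<close>

type_synonym felem = "gen list \<Rightarrow> complex"

definition FA :: "felem set" where
  "FA = {f. finite {v. f v \<noteq> 0}}"

definition mon :: "gen list \<Rightarrow> felem" where
  "mon w = (\<lambda>v. if v = w then 1 else 0)"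

definition fadd :: "felem \<Rightarrow> felem \<Rightarrow> felem" where
  "fadd f g = (\<lambda>v. f v + g v)"

definition fscale :: "complex \<Rightarrow> felem \<Rightarrow> felem" where
  "fscale c f = (\<lambda>v. c * f v)"

definition lmul :: "gen \<Rightarrow> felem \<Rightarrow> felem" where
  "lmul g f = (\<lambda>v. case v of [] \<Rightarrow> 0 | h # v' \<Rightarrow> if h = g then f v' else 0)"

definition rmul :: "gen \<Rightarrow> felem \<Rightarrow> felem" where
  "rmul g f = (\<lambda>v. if v \<noteq> [] \<and> last v = g then f (butlast v) else 0)"

inductive_set weylJ :: "felem set" where
  rel_aa: "(\<lambda>v. mon [A r, A s] v - mon [A s, A r] v) \<in> weylJ"
| rel_ss: "(\<lambda>v. mon [As r, As s] v - mon [As s, As r] v) \<in> weylJ"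
| rel_as: "(\<lambda>v. mon [A r, As s] v - mon [As s, A r] v
              - (if r + s = 0 then 1 else 0) * mon [] v) \<in> weylJ"
| zero: "(\<lambda>v. 0) \<in> weylJ"
| add: "f \<in> weylJ \<Longrightarrow> g \<in> weylJ \<Longrightarrow> fadd f g \<in> weylJ"
| scale: "f \<in> weylJ \<Longrightarrow> fscale c f \<in> weylJ"
| left: "f \<in> weylJ \<Longrightarrow> lmul x f \<in> weylJ"
| right: "f \<in> weylJ \<Longrightarrow> rmul x f \<in> weylJ"

text \<open>preimage in the free algebra of the left ideal I; lam i = lambda_i (i >= 0),
  mu j = mu_j (j >= 1; mu 0 is unused)\<close>
inductive_set whitL :: "(nat \<Rightarrow> complex) \<Rightarrow> (nat \<Rightarrow> complex) \<Rightarrow> felem set"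
  for lam mu where
  weyl: "f \<in> weylJ \<Longrightarrow> f \<in> whitL lam mu"
| gen_a: "(\<lambda>v. mon [A (int i)] v - lam i * mon [] v) \<in> whitL lam mu"
| gen_as: "j \<ge> 1 \<Longrightarrow> (\<lambda>v. mon [As (int j)] v - mu j * mon [] v) \<in> whitL lam mu"
| add: "f \<in> whitL lam mu \<Longrightarrow> g \<in> whitL lam mu \<Longrightarrow> fadd f g \<in> whitL lam mu"
| scale: "f \<in> whitL lam mu \<Longrightarrow> fscale c f \<in> whitL lam mu"
| left: "f \<in> whitL lam mu \<Longrightarrow> lmul x f \<in> whitL lam mu"

text \<open>action of E_{i,j} = :a(-i) a*(j): (left multiplication by the normally ordered product)\<close>
definition Eact :: "int \<Rightarrow> int \<Rightarrow> felem \<Rightarrow> felem" where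
  "Eact i j f = (if - i \<ge> 0 \<and> j \<le> 0 then lmul (As j) (lmul (A (- i)) f)
                 else lmul (A (- i)) (lmul (As j) f))"

definition fsubspace :: "felem set \<Rightarrow> bool" where
  "fsubspace V \<longleftrightarrow> (\<lambda>v. 0) \<in> V \<and> (\<forall>f\<in>V. \<forall>g\<in>V. fadd f g \<in> V) \<and> (\<forall>c. \<forall>f\<in>V. fscale c f \<in> V)"

text \<open>preimage of the submodule generated by w = 1 + L\<close>
inductive_set cycsub :: "(nat \<Rightarrow> complex) \<Rightarrow> (nat \<Rightarrow> complex) \<Rightarrow> felem set"
  for lam mu where
  base: "mon [] \<in> cycsub lam mu"
| ideal: "f \<in> whitL lam mu \<Longrightarrow> f \<in> cycsub lam mu"
| add: "f \<in> cycsub lam mu \<Longrightarrow> g \<in> cycsub lam mu \<Longrightarrow> fadd f g \<in> cycsub lam mu"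
| scale: "f \<in> cycsub lam mu \<Longrightarrow> fscale c f \<in> cycsub lam mu"
| act: "f \<in> cycsub lam mu \<Longrightarrow> Eact i j f \<in> cycsub lam mu"

end

theory Submission
  imports Defs "HOL-Library.Multiset"
begin

text \<open>
  Cyclicity: every word x u of the free algebra is obtained, modulo the Weyl relations, from the
  word x y u, which is some E_{i,j} applied to the shorter word u (up to a swap), by moving y to
  the end of the word, where it acts on the Whittaker vector by a nonzero scalar; commuting y
  past u only produces shorter words.

  Reducibility: the module maps to a Fock-type representation on polynomials, with the Whittaker
  vector going to 1. The charge operator (a-degree minus a*-degree), twisted by subtracting the
  multiplication by a linear form built from lambda and mu, satisfies Q g = g Q + e g, where
  e = 1 for g = a(r) and e = -1 for g = a*(s); hence Q commutes with every E_{i,j}, and the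
  preimage of its range on finitely supported polynomials is a submodule. It contains an element
  mapping to Q 1, a nonzero linear polynomial, so it is nonzero in the module; but it misses the
  Whittaker vector, because Q raises the top power of a variable whose coefficient in the linear
  form is nonzero, so no polynomial is mapped to 1.
\<close>

section \<open>Finitely supported elements and subspaces of the free algebra\<close>

definition supp :: "('a \<Rightarrow> 'b::zero) \<Rightarrow> 'a set" where
  "supp f = {v. f v \<noteq> 0}"

lemma FA_iff_finite_supp: "f \<in> FA \<longleftrightarrow> finite (supp f)"
  by (simp add: FA_def supp_def)

lemma FA_if_supp_subset: "finite S \<Longrightarrow> supp f \<subseteq> S \<Longrightarrow> f \<in> FA"
  by (auto simp: FA_iff_finite_supp intro: finite_subset)

lemma supp_lincomb_subset:
  "supp (\<lambda>x. a * f x + b * g x :: 'b::semiring_0) \<subseteq> supp f \<union> supp g"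
  by (auto simp: supp_def)

lemma lmul_mon: "lmul x (mon w) = mon (x # w)"
  by (auto simp: lmul_def mon_def fun_eq_iff split: list.split)

lemma rmul_mon: "rmul x (mon w) = mon (w @ [x])"
proof
  fix v show "rmul x (mon w) v = mon (w @ [x]) v"
    by (cases v rule: rev_cases) (auto simp: rmul_def mon_def)
qed

lemma lmul_diff: "lmul x (\<lambda>v. f v - g v) = (\<lambda>v. lmul x f v - lmul x g v)"
  by (auto simp: lmul_def fun_eq_iff split: list.split)

lemma lmul_cmult: "lmul x (\<lambda>v. c * f v) = (\<lambda>v. c * lmul x f v)"
  by (auto simp: lmul_def fun_eq_iff split: list.split)

lemma rmul_diff: "rmul x (\<lambda>v. f v - g v) = (\<lambda>v. rmul x f v - rmul x g v)"
  by (auto simp: rmul_def fun_eq_iff)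

lemma rmul_cmult: "rmul x (\<lambda>v. c * f v) = (\<lambda>v. c * rmul x f v)"
  by (auto simp: rmul_def fun_eq_iff)

lemma supp_lmul: "supp (lmul x f) \<subseteq> Cons x ` supp f"
proof
  fix v assume "v \<in> supp (lmul x f)"
  then show "v \<in> Cons x ` supp f"
    by (cases v) (auto simp: supp_def lmul_def split: if_splits)
qed

lemma supp_rmul: "supp (rmul x f) \<subseteq> (\<lambda>w. w @ [x]) ` supp f"
proof
  fix v assume "v \<in> supp (rmul x f)"
  then have "v = butlast v @ [x]" "butlast v \<in> supp f"
    by (auto simp: supp_def rmul_def split: if_splits)
  then show "v \<in> (\<lambda>w. w @ [x]) ` supp f" by blast
qed

lemma FA_lincomb: "f \<in> FA \<Longrightarrow> g \<in> FA \<Longrightarrow> (\<lambda>v. a * f v + b * g v) \<in> FA"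
  by (rule FA_if_supp_subset[OF _ supp_lincomb_subset]) (simp add: FA_iff_finite_supp)

lemma FA_fadd: "f \<in> FA \<Longrightarrow> g \<in> FA \<Longrightarrow> fadd f g \<in> FA"
  using FA_lincomb[of f g 1 1] by (simp add: fadd_def)

lemma FA_fscale: "f \<in> FA \<Longrightarrow> fscale c f \<in> FA"
  using FA_lincomb[of f f c 0] by (simp add: fscale_def)

lemma FA_lmul: "f \<in> FA \<Longrightarrow> lmul x f \<in> FA"
  by (rule FA_if_supp_subset[OF _ supp_lmul]) (simp add: FA_iff_finite_supp)

lemma FA_rmul: "f \<in> FA \<Longrightarrow> rmul x f \<in> FA"
  by (rule FA_if_supp_subset[OF _ supp_rmul]) (simp add: FA_iff_finite_supp)

lemma FA_mon: "mon w \<in> FA"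
  by (rule FA_if_supp_subset[of "{w}"]) (auto simp: supp_def mon_def)

lemma FA_zero: "(\<lambda>v. 0) \<in> FA"
  using FA_fscale[OF FA_mon, of 0] by (simp add: fscale_def)

lemma FA_mon_diff: "(\<lambda>v. mon w v - c * mon w' v) \<in> FA"
  using FA_lincomb[OF FA_mon FA_mon, of 1 w "- c" w'] by simp

lemma weylJ_subset_FA: "weylJ \<subseteq> FA"
proof
  fix f assume "f \<in> weylJ"
  then show "f \<in> FA"
  proof (induction rule: weylJ.induct)
    case (rel_aa r s)
    then show ?case using FA_mon_diff[of _ 1] by simp
  next
    case (rel_ss r s)
    then show ?case using FA_mon_diff[of _ 1] by simp
  next
    case (rel_as r s)
    show ?case
      using FA_lincomb[OF FA_mon_diff FA_mon, of 1 _ 1 _ "- (if r + s = 0 then 1 else 0)" "[]"]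
      by simp
  qed (auto intro: FA_zero FA_fadd FA_fscale FA_lmul FA_rmul)
qed

lemma whitL_subset_FA: "whitL lam mu \<subseteq> FA"
proof
  fix f assume "f \<in> whitL lam mu"
  then show "f \<in> FA"
  proof (induction rule: whitL.induct)
    case (gen_a i)
    then show ?case using FA_mon_diff by simp
  next
    case (gen_as j)
    then show ?case using FA_mon_diff by simp
  qed (use weylJ_subset_FA in \<open>auto intro: FA_fadd FA_fscale FA_lmul\<close>)
qed

lemma FA_Eact: "f \<in> FA \<Longrightarrow> Eact i j f \<in> FA"
  by (simp add: Eact_def FA_lmul)

lemma cycsub_subset_FA: "cycsub lam mu \<subseteq> FA"
proof
  fix f assume "f \<in> cycsub lam mu"
  then show "f \<in> FA"
    by (induction rule: cycsub.induct)
      (use whitL_subset_FA in \<open>auto intro: FA_mon FA_fadd FA_fscale FA_Eact\<close>)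
qed

lemma fsubspace_lincomb:
  "fsubspace V \<Longrightarrow> f \<in> V \<Longrightarrow> g \<in> V \<Longrightarrow> (\<lambda>v. a * f v + b * g v) \<in> V"
proof -
  assume "fsubspace V" "f \<in> V" "g \<in> V"
  then have "fadd (fscale a f) (fscale b g) \<in> V" by (simp add: fsubspace_def)
  then show ?thesis by (simp add: fadd_def fscale_def)
qed

lemma fsubspace_lincomb_eq:
  assumes "fsubspace V" "f \<in> V" "g \<in> V" "\<And>v. h v = a * f v + b * g v"
  shows "h \<in> V"
proof -
  have "h = (\<lambda>v. a * f v + b * g v)" using assms(4) by blast
  then show ?thesis using fsubspace_lincomb[OF assms(1-3)] by simp
qed

lemma fsubspace_diff_iff:
  assumes "fsubspace V" "(\<lambda>v. f v - g v) \<in> V"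
  shows "f \<in> V \<longleftrightarrow> g \<in> V"
proof
  assume "f \<in> V"
  then show "g \<in> V"
    by (rule fsubspace_lincomb_eq[OF assms(1) _ assms(2), where a = 1 and b = "-1"]) simp
next
  assume "g \<in> V"
  then show "f \<in> V"
    by (rule fsubspace_lincomb_eq[OF assms(1) assms(2), where a = 1 and b = 1]) simp
qed

lemma fsubspace_cmult_iff:
  assumes "fsubspace V" "c \<noteq> 0"
  shows "(\<lambda>v. c * f v) \<in> V \<longleftrightarrow> f \<in> V"
proof
  assume "(\<lambda>v. c * f v) \<in> V"
  from fsubspace_lincomb_eq[OF assms(1) this this, where a = "1/c" and b = 0 and h = f]
  show "f \<in> V" using assms(2) by simp
next
  assume "f \<in> V"
  from fsubspace_lincomb_eq[OF assms(1) this this, where a = c and b = 0]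
  show "(\<lambda>v. c * f v) \<in> V" by simp
qed

lemma fsubspace_sum:
  assumes "fsubspace V" "finite S" "\<And>w. w \<in> S \<Longrightarrow> h w \<in> V"
  shows "(\<lambda>v. \<Sum>w\<in>S. c w * h w v) \<in> V"
  using assms(2,3)
proof (induction S rule: finite_induct)
  case empty
  then show ?case using assms(1) by (simp add: fsubspace_def)
next
  case (insert x S)
  then show ?case
    using fsubspace_lincomb[OF assms(1) insert.IH, of "h x" 1 "c x"] by (simp add: add.commute)
qed

lemma FA_subset_fsubspace:
  assumes V: "fsubspace V" and mon: "\<And>w. mon w \<in> V"
  shows "FA \<subseteq> V"
proof
  fix f assume "f \<in> FA"
  then have "finite (supp f)" by (simp add: FA_iff_finite_supp)
  then have "(\<lambda>v. \<Sum>w\<in>supp f. f w * mon w v) \<in> V"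
    using fsubspace_sum[OF V] mon by blast
  moreover have "(\<Sum>w\<in>supp f. f w * mon w v) = f v" for v
  proof -
    have "(\<Sum>w\<in>supp f. f w * mon w v) = (\<Sum>w\<in>supp f. if w = v then f v else 0)"
      by (rule sum.cong) (auto simp: mon_def)
    also have "\<dots> = f v"
      using \<open>finite (supp f)\<close> by (auto simp: supp_def)
    finally show ?thesis .
  qed
  ultimately show "f \<in> V" by simp
qed

lemma fsubspace_cycsub: "fsubspace (cycsub lam mu)"
  by (auto simp: fsubspace_def intro: cycsub.intros whitL.weyl weylJ.zero)

section \<open>Cyclicity of the Whittaker vector\<close>

fun weyl_bracket :: "gen \<Rightarrow> gen \<Rightarrow> complex" where
  "weyl_bracket (A r) (As s) = (if r + s = 0 then 1 else 0)"
| "weyl_bracket (As s) (A r) = - (if r + s = 0 then 1 else 0)"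
| "weyl_bracket _ _ = 0"

lemma weylJ_swap: "(\<lambda>v. mon [x, y] v - mon [y, x] v - weyl_bracket x y * mon [] v) \<in> weylJ"
proof (cases x; cases y)
  fix r s assume "x = As r" "y = A s"
  then have "fscale (-1) (\<lambda>v. mon [y, x] v - mon [x, y] v - (if s + r = 0 then 1 else 0) * mon [] v)
      = (\<lambda>v. mon [x, y] v - mon [y, x] v - weyl_bracket x y * mon [] v)"
    by (auto simp: fscale_def fun_eq_iff algebra_simps)
  with weylJ.scale[OF weylJ.rel_as[of s r], of "-1"] \<open>x = As r\<close> \<open>y = A s\<close>
  show ?thesis by simp
qed (use weylJ.rel_aa weylJ.rel_ss weylJ.rel_as in simp_all)

lemma weylJ_mon_context:
  assumes "(\<lambda>v. mon a v - mon b v - c * mon d v) \<in> weylJ"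
  shows "(\<lambda>v. mon (p @ a @ q) v - mon (p @ b @ q) v - c * mon (p @ d @ q) v) \<in> weylJ"
proof -
  have "(\<lambda>v. mon (a @ q) v - mon (b @ q) v - c * mon (d @ q) v) \<in> weylJ" using assms
  proof (induction q arbitrary: a b d)
    case (Cons x q)
    from weylJ.right[OF Cons.prems, of x]
    have "(\<lambda>v. mon (a @ [x]) v - mon (b @ [x]) v - c * mon (d @ [x]) v) \<in> weylJ"
      by (simp add: rmul_diff rmul_cmult rmul_mon)
    from Cons.IH[OF this] show ?case by simp
  qed simp
  then show ?thesis
  proof (induction p)
    case (Cons x p)
    from weylJ.left[OF Cons.IH[OF Cons.prems], of x] show ?case
      by (simp add: lmul_diff lmul_cmult lmul_mon)
  qed simp
qed

lemma fsubspace_swap_diff: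
  assumes V: "fsubspace V" "weylJ \<subseteq> V" and pq: "mon (p @ q) \<in> V"
  shows "(\<lambda>v. mon (p @ [x, y] @ q) v - mon (p @ [y, x] @ q) v) \<in> V"
proof -
  have "(\<lambda>v. mon (p @ [x, y] @ q) v - mon (p @ [y, x] @ q) v
      - weyl_bracket x y * mon (p @ q) v) \<in> V"
    using weylJ_mon_context[OF weylJ_swap] V(2) by fastforce
  then show ?thesis
    by (rule fsubspace_lincomb_eq[OF V(1) _ pq, where a = 1 and b = "weyl_bracket x y"]) simp
qed

lemma fsubspace_swap_iff:
  assumes "fsubspace V" "weylJ \<subseteq> V" "mon (p @ q) \<in> V"
  shows "mon (p @ [x, y] @ q) \<in> V \<longleftrightarrow> mon (p @ [y, x] @ q) \<in> V"
  using fsubspace_diff_iff[OF assms(1) fsubspace_swap_diff[OF assms]] .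

lemma fsubspace_move_to_front:
  assumes V: "fsubspace V" "weylJ \<subseteq> V"
    and shorter: "\<forall>w. length w < length u \<longrightarrow> mon (p @ w) \<in> V"
  shows "(\<lambda>v. mon (p @ u @ [y]) v - mon (p @ y # u) v) \<in> V"
  using shorter
proof (induction u arbitrary: p)
  case Nil
  then show ?case using V by (simp add: fsubspace_def)
next
  case (Cons x u)
  have "mon ((p @ [x]) @ w) \<in> V" if "length w < length u" for w
    using Cons.prems that by (metis append.assoc append_Cons append_Nil length_Cons not_less_eq)
  then have "(\<lambda>v. mon ((p @ [x]) @ u @ [y]) v - mon ((p @ [x]) @ y # u) v) \<in> V"
    using Cons.IH by blast
  then have "(\<lambda>v. mon (p @ x # u @ [y]) v - mon (p @ x # y # u) v) \<in> V"
    by simp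
  moreover have "(\<lambda>v. mon (p @ [x, y] @ u) v - mon (p @ [y, x] @ u) v) \<in> V"
    using Cons.prems by (intro fsubspace_swap_diff[OF V]) simp
  ultimately show ?case
    by (rule fsubspace_lincomb_eq[OF V(1), where a = 1 and b = 1]) simp
qed

lemma weylJ_subset_cycsub: "weylJ \<subseteq> cycsub lam mu"
  by (auto intro: cycsub.ideal whitL.weyl)

lemma cycsub_mon_pair:
  assumes "mon u \<in> cycsub lam mu"
  shows "mon (A r # As s # u) \<in> cycsub lam mu \<and> mon (As s # A r # u) \<in> cycsub lam mu"
proof -
  have swap: "mon ([] @ [A r, As s] @ u) \<in> cycsub lam mu
      \<longleftrightarrow> mon ([] @ [As s, A r] @ u) \<in> cycsub lam mu"
    using assms by (intro fsubspace_swap_iff fsubspace_cycsub weylJ_subset_cycsub) simp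
  have "Eact (- r) s (mon u) \<in> cycsub lam mu"
    using assms by (rule cycsub.act)
  then have "mon (A r # As s # u) \<in> cycsub lam mu \<or> mon (As s # A r # u) \<in> cycsub lam mu"
    by (auto simp: Eact_def lmul_mon split: if_splits)
  with swap show ?thesis by simp
qed

lemma whitL_gen_a_context: "(\<lambda>v. mon (p @ [A (int i)]) v - lam i * mon p v) \<in> whitL lam mu"
proof (induction p)
  case Nil
  show ?case using whitL.gen_a by simp
next
  case (Cons x p)
  from whitL.left[OF Cons.IH, of x] show ?case
    by (simp add: lmul_diff lmul_cmult lmul_mon)
qed

lemma whitL_gen_as_context:
  "j \<ge> 1 \<Longrightarrow> (\<lambda>v. mon (p @ [As (int j)]) v - mu j * mon p v) \<in> whitL lam mu"
proof (induction p)
  case Nil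
  then show ?case using whitL.gen_as by simp
next
  case (Cons x p)
  from whitL.left[OF Cons.IH[OF Cons.prems], of x] show ?case
    by (simp add: lmul_diff lmul_cmult lmul_mon)
qed

lemma mon_in_cycsub:
  assumes lam: "lam k \<noteq> 0" and mu: "mu l \<noteq> 0" "l \<ge> 1"
  shows "mon w \<in> cycsub lam mu"
proof (induction "length w" arbitrary: w rule: less_induct)
  case less
  show ?case
  proof (cases w)
    case Nil
    then show ?thesis by (simp add: cycsub.base)
  next
    case (Cons x u)
    have shorter: "\<forall>w'. length w' < length u \<longrightarrow> mon ([x] @ w') \<in> cycsub lam mu"
      using less Cons by simp
    have u: "mon u \<in> cycsub lam mu" using less Cons by simp
    obtain y c where c: "c \<noteq> 0"
      and whit: "(\<lambda>v. mon (x # u @ [y]) v - c * mon (x # u) v) \<in> cycsub lam mu"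
      and pair: "mon (x # y # u) \<in> cycsub lam mu"
    proof (cases x)
      case (A r)
      show thesis
      proof (rule that[OF mu(1)])
        show "(\<lambda>v. mon (x # u @ [As (int l)]) v - mu l * mon (x # u) v) \<in> cycsub lam mu"
          using cycsub.ideal[OF whitL_gen_as_context[OF mu(2), where p = "x # u"]] by simp
        show "mon (x # As (int l) # u) \<in> cycsub lam mu"
          using cycsub_mon_pair[OF u] A by simp
      qed
    next
      case (As s)
      show thesis
      proof (rule that[OF lam])
        show "(\<lambda>v. mon (x # u @ [A (int k)]) v - lam k * mon (x # u) v) \<in> cycsub lam mu"
          using cycsub.ideal[OF whitL_gen_a_context[where p = "x # u"]] by simp
        show "mon (x # A (int k) # u) \<in> cycsub lam mu"
          using cycsub_mon_pair[OF u] As by simp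
      qed
    qed
    have "(\<lambda>v. mon ([x] @ u @ [y]) v - mon ([x] @ y # u) v) \<in> cycsub lam mu"
      using shorter by (intro fsubspace_move_to_front fsubspace_cycsub weylJ_subset_cycsub)
    with pair have "mon (x # u @ [y]) \<in> cycsub lam mu"
      using fsubspace_diff_iff[OF fsubspace_cycsub] by auto
    then have "(\<lambda>v. c * mon (x # u) v) \<in> cycsub lam mu"
      using fsubspace_diff_iff[OF fsubspace_cycsub whit] by blast
    with c show ?thesis
      using fsubspace_cmult_iff[OF fsubspace_cycsub] Cons by blast
  qed
qed

lemma cycsub_eq_FA:
  assumes "\<exists>k. lam k \<noteq> 0" "\<exists>l\<ge>1. mu l \<noteq> 0"
  shows "cycsub lam mu = FA"
proof -
  obtain k l where "lam k \<noteq> 0" "mu l \<noteq> 0" "l \<ge> 1" using assms by blast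
  then have "\<And>w. mon w \<in> cycsub lam mu" by (rule mon_in_cycsub)
  then show ?thesis
    using cycsub_subset_FA FA_subset_fsubspace[OF fsubspace_cycsub] by blast
qed

section \<open>A Fock-type representation\<close>

text \<open>Polynomials in commuting variables indexed by the generators, as coefficient functions on
  exponent multisets.\<close>

type_synonym poly = "gen multiset \<Rightarrow> complex"

definition var_mult :: "gen \<Rightarrow> poly \<Rightarrow> poly" where
  "var_mult u p = (\<lambda>M. if u \<in># M then p (M - {#u#}) else 0)"

definition var_deriv :: "gen \<Rightarrow> poly \<Rightarrow> poly" where
  "var_deriv u p = (\<lambda>M. of_nat (count M u + 1) * p (add_mset u M))"

lemma var_mult_add_mset [simp]: "var_mult u p (add_mset u M) = p M"
  by (simp add: var_mult_def)

lemma var_mult_commute: "var_mult u (var_mult v p) = var_mult v (var_mult u p)"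
proof
  fix M show "var_mult u (var_mult v p) M = var_mult v (var_mult u p) M"
  proof (cases "u \<in># M \<and> v \<in># M \<and> u \<noteq> v")
    case True
    then obtain M' where "M = add_mset u (add_mset v M')"
      by (metis insert_DiffM insert_noteq_member)
    then show ?thesis using True by (simp add: var_mult_def add_mset_commute[of u v])
  next
    case False
    then show ?thesis by (auto simp: var_mult_def in_diff_count)
  qed
qed

lemma var_deriv_var_mult_ne: "u \<noteq> v \<Longrightarrow> var_deriv v (var_mult u p) = var_mult u (var_deriv v p)"
proof
  fix M assume "u \<noteq> v"
  show "var_deriv v (var_mult u p) M = var_mult u (var_deriv v p) M"
  proof (cases "u \<in># M")
    case True
    then obtain M' where "M = add_mset u M'" by (metis mset_add)
    then show ?thesis using \<open>u \<noteq> v\<close> by (simp add: var_deriv_def var_mult_def add_mset_commute)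
  next
    case False
    then show ?thesis using \<open>u \<noteq> v\<close> by (simp add: var_deriv_def var_mult_def)
  qed
qed

lemma var_deriv_var_mult_same: "var_deriv v (var_mult v p) M = var_mult v (var_deriv v p) M + p M"
proof (cases "v \<in># M")
  case True
  then obtain M' where "M = add_mset v M'" by (metis mset_add)
  then show ?thesis by (simp add: var_deriv_def var_mult_def algebra_simps)
next
  case False
  then have "count M v = 0" by (simp add: not_in_iff)
  with False show ?thesis by (simp add: var_deriv_def var_mult_def)
qed

lemma var_deriv_commute: "var_deriv u (var_deriv v p) = var_deriv v (var_deriv u p)"
proof
  fix M show "var_deriv u (var_deriv v p) M = var_deriv v (var_deriv u p) M"
  proof (cases "u = v")
    case False
    then show ?thesis
      by (simp add: var_deriv_def add_mset_commute[of u v] mult.left_commute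
          del: of_nat_add of_nat_Suc)
  qed simp
qed

text \<open>The generators a(r), r \<ge> 0, and a*(s), s \<ge> 1, which act on the Whittaker vector by
  lam r resp. mu s, act as that scalar plus the derivation in the variable of a*(-r) resp.
  minus the derivation in the variable of a(-s) (the sign gives [a(-s), a*(s)] = 1); all other
  generators act by multiplication by their own variable.\<close>

fun whit_char :: "(nat \<Rightarrow> complex) \<Rightarrow> (nat \<Rightarrow> complex) \<Rightarrow> gen \<Rightarrow> complex" where
  "whit_char lam mu (A r) = (if r \<ge> 0 then lam (nat r) else 0)"
| "whit_char lam mu (As s) = (if s \<ge> 1 then mu (nat s) else 0)"

fun fock_sign :: "gen \<Rightarrow> complex" where
  "fock_sign (A r) = 1"
| "fock_sign (As s) = (if s \<ge> 1 then -1 else 1)"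

fun fock_op :: "gen \<Rightarrow> poly \<Rightarrow> poly" where
  "fock_op (A r) = (if r \<ge> 0 then var_deriv (As (- r)) else var_mult (A r))"
| "fock_op (As s) = (if s \<ge> 1 then var_deriv (A (- s)) else var_mult (As s))"

definition fock_act :: "(nat \<Rightarrow> complex) \<Rightarrow> (nat \<Rightarrow> complex) \<Rightarrow> gen \<Rightarrow> poly \<Rightarrow> poly" where
  "fock_act lam mu g p = (\<lambda>M. whit_char lam mu g * p M + fock_sign g * fock_op g p M)"

lemma fock_op_sum: "fock_op g (\<lambda>M. \<Sum>i\<in>S. c i * q i M) M = (\<Sum>i\<in>S. c i * fock_op g (q i) M)"
  by (cases g) (auto simp: var_deriv_def var_mult_def sum_distrib_left mult.left_commute)

lemma fock_op_lincomb: "fock_op g (\<lambda>M. a * p M + b * q M) M = a * fock_op g p M + b * fock_op g q M"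
  by (cases g) (auto simp: var_deriv_def var_mult_def algebra_simps)

lemma fock_act_sum:
  "fock_act lam mu g (\<lambda>M. \<Sum>i\<in>S. c i * q i M) M = (\<Sum>i\<in>S. c i * fock_act lam mu g (q i) M)"
  by (simp add: fock_act_def fock_op_sum sum_distrib_left sum.distrib algebra_simps)

lemma fock_act_lincomb:
  "fock_act lam mu g (\<lambda>M. a * p M + b * q M) M
   = a * fock_act lam mu g p M + b * fock_act lam mu g q M"
  by (simp add: fock_act_def fock_op_lincomb algebra_simps)

lemma fock_act_zero: "fock_act lam mu g (\<lambda>M. 0) = (\<lambda>M. 0)"
  using fock_act_sum[of lam mu g "\<lambda>_. 0" "\<lambda>_ _. 0" "{}"] by (simp add: fun_eq_iff)

lemma fock_act_commutator:
  "fock_act lam mu g (fock_act lam mu h p) M = fock_act lam mu h (fock_act lam mu g p) M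
   + fock_sign g * fock_sign h * (fock_op g (fock_op h p) M - fock_op h (fock_op g p) M)"
  unfolding fock_act_def fock_op_lincomb by (simp add: algebra_simps)

lemma fock_act_A_A:
  "fock_act lam mu (A r) (fock_act lam mu (A s) p) M
   = fock_act lam mu (A s) (fock_act lam mu (A r) p) M"
  by (simp add: fock_act_commutator[of _ _ "A r"]
      var_deriv_commute var_mult_commute var_deriv_var_mult_ne)

lemma fock_act_As_As:
  "fock_act lam mu (As r) (fock_act lam mu (As s) p) M
   = fock_act lam mu (As s) (fock_act lam mu (As r) p) M"
  by (simp add: fock_act_commutator[of _ _ "As r"]
      var_deriv_commute var_mult_commute var_deriv_var_mult_ne)

lemma fock_op_A_As_commutator:
  "fock_op (A r) (fock_op (As s) p) M - fock_op (As s) (fock_op (A r) p) M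
   = fock_sign (As s) * (if r + s = 0 then 1 else 0) * p M"
proof (cases "r \<ge> 0"; cases "s \<ge> 1")
  assume "r \<ge> 0" "\<not> s \<ge> 1"
  then show ?thesis
    using var_deriv_var_mult_same[of "As s" p M] var_deriv_var_mult_ne[of "As s" "As (- r)" p]
    by (cases "s = - r") auto
next
  assume "\<not> r \<ge> 0" "s \<ge> 1"
  then show ?thesis
    using var_deriv_var_mult_same[of "A r" p M] var_deriv_var_mult_ne[of "A r" "A (- s)" p]
    by (cases "r = - s") auto
qed (simp_all add: var_deriv_commute var_mult_commute)

lemma fock_act_A_As:
  "fock_act lam mu (A r) (fock_act lam mu (As s) p) M
   = fock_act lam mu (As s) (fock_act lam mu (A r) p) M + (if r + s = 0 then 1 else 0) * p M"
proof -
  have "fock_sign (As s) * fock_sign (As s) = 1" by simp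
  then show ?thesis
    unfolding fock_act_commutator[of lam mu "A r"] fock_op_A_As_commutator
    by (simp add: algebra_simps)
qed

fun fock_word :: "(nat \<Rightarrow> complex) \<Rightarrow> (nat \<Rightarrow> complex) \<Rightarrow> gen list \<Rightarrow> poly \<Rightarrow> poly" where
  "fock_word lam mu [] p = p"
| "fock_word lam mu (g # w) p = fock_act lam mu g (fock_word lam mu w p)"

lemma fock_word_snoc: "fock_word lam mu (w @ [x]) p = fock_word lam mu w (fock_act lam mu x p)"
  by (induction w) auto

definition fock_eval :: "(nat \<Rightarrow> complex) \<Rightarrow> (nat \<Rightarrow> complex) \<Rightarrow> felem \<Rightarrow> poly \<Rightarrow> poly" where
  "fock_eval lam mu f p = (\<lambda>M. \<Sum>w\<in>supp f. f w * fock_word lam mu w p M)"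

lemma fock_eval_eq_sum:
  "finite S \<Longrightarrow> supp f \<subseteq> S \<Longrightarrow> fock_eval lam mu f p M = (\<Sum>w\<in>S. f w * fock_word lam mu w p M)"
  unfolding fock_eval_def by (rule sum.mono_neutral_left) (auto simp: supp_def)

lemma fock_eval_lincomb:
  assumes "f \<in> FA" "g \<in> FA" "\<And>v. h v = a * f v + b * g v"
  shows "fock_eval lam mu h p M = a * fock_eval lam mu f p M + b * fock_eval lam mu g p M"
proof -
  let ?S = "supp f \<union> supp g"
  have fin: "finite ?S" using assms(1,2) by (auto simp: FA_iff_finite_supp)
  have "supp h \<subseteq> ?S" using assms(3) by (auto simp: supp_def)
  then have "fock_eval lam mu h p M = (\<Sum>w\<in>?S. (a * f w + b * g w) * fock_word lam mu w p M)"
    using fock_eval_eq_sum[OF fin] assms(3) by simp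
  also have "\<dots> = a * (\<Sum>w\<in>?S. f w * fock_word lam mu w p M)
      + b * (\<Sum>w\<in>?S. g w * fock_word lam mu w p M)"
    by (simp add: sum_distrib_left sum.distrib algebra_simps)
  also have "\<dots> = a * fock_eval lam mu f p M + b * fock_eval lam mu g p M"
    using fock_eval_eq_sum[OF fin] by simp
  finally show ?thesis .
qed

lemma fock_eval_fadd:
  "f \<in> FA \<Longrightarrow> g \<in> FA \<Longrightarrow>
   fock_eval lam mu (fadd f g) p M = fock_eval lam mu f p M + fock_eval lam mu g p M"
  using fock_eval_lincomb[of f g "fadd f g" 1 1] by (simp add: fadd_def)

lemma fock_eval_fscale: "f \<in> FA \<Longrightarrow> fock_eval lam mu (fscale c f) p M = c * fock_eval lam mu f p M"
  using fock_eval_lincomb[of f f "fscale c f" c 0] by (simp add: fscale_def)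

lemma fock_eval_mon: "fock_eval lam mu (mon w) p M = fock_word lam mu w p M"
  using fock_eval_eq_sum[of "{w}" "mon w"] by (simp add: supp_def mon_def)

lemma fock_eval_mon_lincomb:
  "fock_eval lam mu (\<lambda>v. mon w v - c * mon w' v) p M
   = fock_word lam mu w p M - c * fock_word lam mu w' p M"
  using fock_eval_lincomb[OF FA_mon FA_mon,
      where h = "\<lambda>v. mon w v - c * mon w' v" and a = 1 and b = "- c"]
  by (simp add: fock_eval_mon)

lemma fock_eval_lmul:
  assumes "f \<in> FA"
  shows "fock_eval lam mu (lmul x f) p = fock_act lam mu x (fock_eval lam mu f p)"
proof
  fix M
  have fin: "finite (supp f)" using assms by (simp add: FA_iff_finite_supp)
  have "fock_eval lam mu (lmul x f) p M = (\<Sum>w\<in>Cons x ` supp f. lmul x f w * fock_word lam mu w p M)"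
    using fin by (intro fock_eval_eq_sum supp_lmul) auto
  also have "\<dots> = (\<Sum>w\<in>supp f. f w * fock_act lam mu x (fock_word lam mu w p) M)"
    by (subst sum.reindex) (auto simp: lmul_def)
  also have "\<dots> = fock_act lam mu x (fock_eval lam mu f p) M"
    unfolding fock_eval_def by (rule fock_act_sum[symmetric])
  finally show "fock_eval lam mu (lmul x f) p M = fock_act lam mu x (fock_eval lam mu f p) M" .
qed

lemma fock_eval_rmul:
  assumes "f \<in> FA"
  shows "fock_eval lam mu (rmul x f) p = fock_eval lam mu f (fock_act lam mu x p)"
proof
  fix M
  have fin: "finite (supp f)" using assms by (simp add: FA_iff_finite_supp)
  have "fock_eval lam mu (rmul x f) p M
      = (\<Sum>w\<in>(\<lambda>w. w @ [x]) ` supp f. rmul x f w * fock_word lam mu w p M)"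
    using fin by (intro fock_eval_eq_sum supp_rmul) auto
  also have "\<dots> = fock_eval lam mu f (fock_act lam mu x p) M"
    by (subst sum.reindex) (auto simp: rmul_def inj_on_def fock_word_snoc fock_eval_def)
  finally show "fock_eval lam mu (rmul x f) p M = fock_eval lam mu f (fock_act lam mu x p) M" .
qed

lemma fock_eval_weylJ: "f \<in> weylJ \<Longrightarrow> fock_eval lam mu f p = (\<lambda>M. 0)"
proof (induction arbitrary: p rule: weylJ.induct)
  case (rel_aa r s)
  then show ?case
    using fock_eval_mon_lincomb[where w = "[A r, A s]" and c = 1 and w' = "[A s, A r]"]
    by (simp add: fun_eq_iff fock_act_A_A)
next
  case (rel_ss r s)
  then show ?case
    using fock_eval_mon_lincomb[where w = "[As r, As s]" and c = 1 and w' = "[As s, As r]"]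
    by (simp add: fun_eq_iff fock_act_As_As)
next
  case (rel_as r s)
  let ?c = "if r + s = 0 then 1 else 0 :: complex"
  have "fock_eval lam mu (\<lambda>v. mon [A r, As s] v - mon [As s, A r] v - ?c * mon [] v) p M
      = 1 * fock_eval lam mu (\<lambda>v. mon [A r, As s] v - 1 * mon [As s, A r] v) p M
        + (- ?c) * fock_eval lam mu (mon []) p M" for M
    by (rule fock_eval_lincomb[OF FA_mon_diff FA_mon]) simp
  then show ?case
    using fock_eval_mon_lincomb[where w = "[A r, As s]" and c = 1 and w' = "[As s, A r]"]
    by (simp add: fun_eq_iff fock_eval_mon fock_act_A_As)
next
  case zero
  then show ?case by (simp add: fock_eval_def supp_def)
next
  case (add f g)
  then show ?case by (simp add: fun_eq_iff fock_eval_fadd weylJ_subset_FA[THEN subsetD])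
next
  case (scale f c)
  then show ?case by (simp add: fun_eq_iff fock_eval_fscale weylJ_subset_FA[THEN subsetD])
next
  case (left f x)
  then show ?case by (simp add: fock_eval_lmul[OF weylJ_subset_FA[THEN subsetD]] fock_act_zero)
next
  case (right f x)
  then show ?case by (simp add: fock_eval_rmul[OF weylJ_subset_FA[THEN subsetD]])
qed

definition vac :: poly where
  "vac = (\<lambda>M. if M = {#} then 1 else 0)"

lemma var_deriv_vac: "var_deriv u vac = (\<lambda>M. 0)"
  by (simp add: var_deriv_def vac_def fun_eq_iff)

lemma fock_eval_whitL: "f \<in> whitL lam mu \<Longrightarrow> fock_eval lam mu f vac = (\<lambda>M. 0)"
proof (induction rule: whitL.induct)
  case (weyl f)
  then show ?case by (rule fock_eval_weylJ)
next
  case (gen_a i)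
  then show ?case by (simp add: fun_eq_iff fock_eval_mon_lincomb fock_act_def var_deriv_vac)
next
  case (gen_as j)
  then show ?case by (simp add: fun_eq_iff fock_eval_mon_lincomb fock_act_def var_deriv_vac)
next
  case (add f g)
  then show ?case by (simp add: fun_eq_iff fock_eval_fadd whitL_subset_FA[THEN subsetD])
next
  case (scale f c)
  then show ?case by (simp add: fun_eq_iff fock_eval_fscale whitL_subset_FA[THEN subsetD])
next
  case (left f x)
  then show ?case by (simp add: fock_eval_lmul[OF whitL_subset_FA[THEN subsetD]] fock_act_zero)
qed

fun charge_sign :: "gen \<Rightarrow> complex" where
  "charge_sign (A r) = 1"
| "charge_sign (As s) = -1"

lemma fock_eval_Eact:
  assumes "f \<in> FA"
  obtains a b where "charge_sign a + charge_sign b = 0"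
    "\<And>p. fock_eval lam mu (Eact i j f) p
       = fock_act lam mu a (fock_act lam mu b (fock_eval lam mu f p))"
proof (cases "- i \<ge> 0 \<and> j \<le> 0")
  case True
  then show thesis
    using assms by (intro that[of "As j" "A (- i)"]) (simp_all add: Eact_def fock_eval_lmul FA_lmul)
next
  case False
  then show thesis
    using assms by (intro that[of "A (- i)" "As j"]) (auto simp: Eact_def fock_eval_lmul FA_lmul)
qed

section \<open>The twisted charge operator\<close>

definition charge :: "gen multiset \<Rightarrow> complex" where
  "charge M = sum_mset (image_mset charge_sign M)"

lemma charge_empty [simp]: "charge {#} = 0"
  by (simp add: charge_def)

lemma charge_add_mset [simp]: "charge (add_mset v M) = charge_sign v + charge M"
  by (simp add: charge_def)

text \<open>twist_coeff u is the scalar by which the generator whose derivation is var_deriv u acts on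
  the Whittaker vector.\<close>

fun twist_coeff :: "(nat \<Rightarrow> complex) \<Rightarrow> (nat \<Rightarrow> complex) \<Rightarrow> gen \<Rightarrow> complex" where
  "twist_coeff lam mu (A r) = (if r < 0 then mu (nat (- r)) else 0)"
| "twist_coeff lam mu (As s) = (if s \<le> 0 then lam (nat (- s)) else 0)"

definition twist_supp :: "(nat \<Rightarrow> complex) \<Rightarrow> (nat \<Rightarrow> complex) \<Rightarrow> gen set" where
  "twist_supp lam mu = {u. twist_coeff lam mu u \<noteq> 0}"

definition twisted_charge :: "(nat \<Rightarrow> complex) \<Rightarrow> (nat \<Rightarrow> complex) \<Rightarrow> poly \<Rightarrow> poly" where
  "twisted_charge lam mu p =
     (\<lambda>M. charge M * p M - (\<Sum>u\<in>twist_supp lam mu. twist_coeff lam mu u * var_mult u p M))"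

lemma finite_twist_supp:
  assumes "\<forall>i>n. lam i = 0" "\<forall>j>m. mu j = 0"
  shows "finite (twist_supp lam mu)"
proof (rule finite_subset)
  show "twist_supp lam mu \<subseteq> (\<lambda>i. A (- int i)) ` {..m} \<union> (\<lambda>j. As (- int j)) ` {..n}"
  proof
    fix u assume "u \<in> twist_supp lam mu"
    then show "u \<in> (\<lambda>i. A (- int i)) ` {..m} \<union> (\<lambda>j. As (- int j)) ` {..n}"
    proof (cases u)
      case (A r)
      with \<open>u \<in> _\<close> assms(2) have "u = A (- int (nat (- r)))" "nat (- r) \<le> m"
        by (auto simp: twist_supp_def split: if_splits intro: leI)
      then show ?thesis by blast
    next
      case (As s)
      with \<open>u \<in> _\<close> assms(1) have "u = As (- int (nat (- s)))" "nat (- s) \<le> n"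
        by (auto simp: twist_supp_def split: if_splits intro: leI)
      then show ?thesis by blast
    qed
  qed
qed simp

lemma sum_twist_supp_delta:
  "finite (twist_supp lam mu) \<Longrightarrow>
   (\<Sum>u\<in>twist_supp lam mu. twist_coeff lam mu u * (if u = v then c else 0))
   = twist_coeff lam mu v * c"
  by (simp add: if_distrib[of "(*) _"] sum.delta twist_supp_def cong: if_cong)

lemma twisted_charge_lincomb:
  "twisted_charge lam mu (\<lambda>M. a * p M + b * q M) M
   = a * twisted_charge lam mu p M + b * twisted_charge lam mu q M"
proof -
  have "var_mult u (\<lambda>M. a * p M + b * q M) M = a * var_mult u p M + b * var_mult u q M" for u
    by (simp add: var_mult_def)
  then show ?thesis
    by (simp add: twisted_charge_def sum_distrib_left sum.distrib algebra_simps sum_subtractf)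
qed

lemma twisted_charge_var_mult:
  "twisted_charge lam mu (var_mult v p) M
   = var_mult v (twisted_charge lam mu p) M + charge_sign v * var_mult v p M"
proof (cases "v \<in># M")
  case True
  then obtain M' where M: "M = add_mset v M'" by (metis mset_add)
  have "var_mult u (var_mult v p) M = var_mult u p M'" for u
    using fun_cong[OF var_mult_commute[of u v p], of M] by (simp add: M)
  then show ?thesis by (simp add: twisted_charge_def M algebra_simps)
next
  case False
  then have "var_mult u (var_mult v p) M = 0" for u
    using fun_cong[OF var_mult_commute[of u v p], of M] by (simp add: var_mult_def)
  with False show ?thesis by (simp add: twisted_charge_def var_mult_def)
qed

lemma twisted_charge_var_deriv:
  assumes "finite (twist_supp lam mu)"
  shows "twisted_charge lam mu (var_deriv v p) M
    = var_deriv v (twisted_charge lam mu p) M - charge_sign v * var_deriv v p M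
      + twist_coeff lam mu v * p M"
proof -
  let ?c = "of_nat (count M v + 1) :: complex"
  have deriv_mult:
    "?c * var_mult u p (add_mset v M) = var_mult u (var_deriv v p) M + (if u = v then p M else 0)"
    for u
  proof (cases "u = v")
    case True
    then show ?thesis using var_deriv_var_mult_same[of v p M] by (simp add: var_deriv_def)
  next
    case False
    then show ?thesis
      using var_deriv_var_mult_ne[OF False, of p] by (simp add: var_deriv_def fun_eq_iff)
  qed
  have "var_deriv v (twisted_charge lam mu p) M
      = (charge_sign v + charge M) * var_deriv v p M
        - (\<Sum>u\<in>twist_supp lam mu. twist_coeff lam mu u * (?c * var_mult u p (add_mset v M)))"
    by (simp add: var_deriv_def twisted_charge_def sum_distrib_left algebra_simps)
  also have "\<dots> = (charge_sign v + charge M) * var_deriv v p M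
      - (\<Sum>u\<in>twist_supp lam mu. twist_coeff lam mu u * var_mult u (var_deriv v p) M)
      - twist_coeff lam mu v * p M"
    by (simp only: deriv_mult distrib_left sum.distrib sum_twist_supp_delta[OF assms]) simp
  finally show ?thesis by (simp add: twisted_charge_def algebra_simps)
qed

text \<open>The twist is exactly what makes the scalar parts whit_char of the annihilators cancel.\<close>

lemma twisted_charge_fock_act:
  assumes "finite (twist_supp lam mu)"
  shows "twisted_charge lam mu (fock_act lam mu g p) M
    = fock_act lam mu g (twisted_charge lam mu p) M + charge_sign g * fock_act lam mu g p M"
proof -
  have "fock_sign g * twisted_charge lam mu (fock_op g p) M
      = fock_sign g * fock_op g (twisted_charge lam mu p) M + charge_sign g * fock_act lam mu g p M"
    by (cases g; cases "g = A 0")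
      (auto simp: twisted_charge_var_mult twisted_charge_var_deriv[OF assms] fock_act_def
        algebra_simps)
  then show ?thesis
    by (simp add: fock_act_def twisted_charge_lincomb)
qed

lemma twisted_charge_fock_act_pair:
  assumes "finite (twist_supp lam mu)" "charge_sign a + charge_sign b = 0"
  shows "twisted_charge lam mu (fock_act lam mu a (fock_act lam mu b p))
    = fock_act lam mu a (fock_act lam mu b (twisted_charge lam mu p))"
proof
  fix M
  have inner: "twisted_charge lam mu (fock_act lam mu b p)
      = (\<lambda>M. 1 * fock_act lam mu b (twisted_charge lam mu p) M
          + charge_sign b * fock_act lam mu b p M)"
    by (simp add: fun_eq_iff twisted_charge_fock_act[OF assms(1)])
  have "twisted_charge lam mu (fock_act lam mu a (fock_act lam mu b p)) M
      = fock_act lam mu a (twisted_charge lam mu (fock_act lam mu b p)) M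
        + charge_sign a * fock_act lam mu a (fock_act lam mu b p) M"
    by (rule twisted_charge_fock_act[OF assms(1)])
  also have "\<dots> = fock_act lam mu a (fock_act lam mu b (twisted_charge lam mu p)) M
      + (charge_sign a + charge_sign b) * fock_act lam mu a (fock_act lam mu b p) M"
    unfolding inner fock_act_lincomb by (simp add: algebra_simps)
  finally show "twisted_charge lam mu (fock_act lam mu a (fock_act lam mu b p)) M
      = fock_act lam mu a (fock_act lam mu b (twisted_charge lam mu p)) M"
    using assms(2) by simp
qed

lemma finite_supp_var_mult: "finite (supp p) \<Longrightarrow> finite (supp (var_mult u p))"
proof (rule finite_subset)
  show "supp (var_mult u p) \<subseteq> add_mset u ` supp p"
  proof
    fix M assume "M \<in> supp (var_mult u p)"
    then have "M = add_mset u (M - {#u#})" "M - {#u#} \<in> supp p"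
      by (auto simp: supp_def var_mult_def split: if_splits)
    then show "M \<in> add_mset u ` supp p" by blast
  qed
qed simp

lemma finite_supp_var_deriv: "finite (supp p) \<Longrightarrow> finite (supp (var_deriv u p))"
proof (rule finite_subset)
  show "supp (var_deriv u p) \<subseteq> (\<lambda>M. M - {#u#}) ` supp p"
  proof
    fix M assume "M \<in> supp (var_deriv u p)"
    then have "M = add_mset u M - {#u#}" "add_mset u M \<in> supp p"
      by (auto simp: supp_def var_deriv_def)
    then show "M \<in> (\<lambda>M. M - {#u#}) ` supp p" by blast
  qed
qed simp

lemma finite_supp_fock_act: "finite (supp p) \<Longrightarrow> finite (supp (fock_act lam mu g p))"
proof -
  assume "finite (supp p)"
  then have "finite (supp (fock_op g p))"
    by (cases g) (auto intro: finite_supp_var_mult finite_supp_var_deriv)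
  with \<open>finite (supp p)\<close> show ?thesis
    using supp_lincomb_subset[of "whit_char lam mu g" p "fock_sign g" "fock_op g p"]
    unfolding fock_act_def by (blast intro: finite_subset)
qed

lemma twisted_charge_zero: "twisted_charge lam mu (\<lambda>M. 0) = (\<lambda>M. 0)"
  by (simp add: twisted_charge_def var_mult_def)

lemma twisted_charge_ne_vac:
  assumes fin: "finite (twist_supp lam mu)" and v: "v \<in> twist_supp lam mu"
    and q: "finite (supp q)"
  shows "twisted_charge lam mu q \<noteq> vac"
proof
  assume Q: "twisted_charge lam mu q = vac"
  show False
  proof (cases "supp q = {}")
    case True
    then have "q = (\<lambda>M. 0)" by (auto simp: supp_def)
    with Q have "vac = (\<lambda>M. 0)" by (simp add: twisted_charge_zero)
    then show False by (metis vac_def zero_neq_one)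
  next
    case False
    define d where "d = Max ((\<lambda>M. count M v) ` supp q)"
    have top: "count M v \<le> d" if "q M \<noteq> 0" for M
      using q that by (auto simp: d_def supp_def)
    have "d \<in> (\<lambda>M. count M v) ` supp q"
      unfolding d_def using q False by (intro Max_in) auto
    then obtain M0 where M0: "q M0 \<noteq> 0" "count M0 v = d"
      by (auto simp: supp_def)
    define M1 where "M1 = add_mset v M0"
    have "var_mult u q M1 = (if u = v then q M0 else 0)" for u
      using top[of "M1 - {#u#}"] M0 by (cases "u = v") (auto simp: var_mult_def M1_def)
    moreover have "q M1 = 0"
      using top[of M1] M0 by (auto simp: M1_def)
    ultimately have "twisted_charge lam mu q M1 = - (twist_coeff lam mu v * q M0)"
      by (simp add: twisted_charge_def sum_twist_supp_delta[OF fin])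
    moreover have "vac M1 = 0" by (simp add: vac_def M1_def)
    ultimately show False
      using Q M0 v by (auto simp: twist_supp_def)
  qed
qed

section \<open>A proper nonzero submodule\<close>

definition twisted_sub :: "(nat \<Rightarrow> complex) \<Rightarrow> (nat \<Rightarrow> complex) \<Rightarrow> felem set" where
  "twisted_sub lam mu =
     {f \<in> FA. \<exists>q. finite (supp q) \<and> fock_eval lam mu f vac = twisted_charge lam mu q}"

lemma whitL_subset_twisted_sub: "whitL lam mu \<subseteq> twisted_sub lam mu"
proof
  fix f assume f: "f \<in> whitL lam mu"
  then have "fock_eval lam mu f vac = twisted_charge lam mu (\<lambda>M. 0)"
    by (simp add: fock_eval_whitL twisted_charge_zero)
  moreover have "finite (supp (\<lambda>M. 0 :: complex))" by (simp add: supp_def)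
  ultimately show "f \<in> twisted_sub lam mu"
    using f whitL_subset_FA unfolding twisted_sub_def by blast
qed

lemma fsubspace_twisted_sub: "fsubspace (twisted_sub lam mu)"
proof -
  have lincomb: "(\<lambda>v. a * f v + b * g v) \<in> twisted_sub lam mu"
    if f_in: "f \<in> twisted_sub lam mu" and g_in: "g \<in> twisted_sub lam mu" for a b f g
  proof -
    obtain q where f: "f \<in> FA" "finite (supp q)"
        "fock_eval lam mu f vac = twisted_charge lam mu q"
      using f_in unfolding twisted_sub_def by blast
    obtain q' where g: "g \<in> FA" "finite (supp q')"
        "fock_eval lam mu g vac = twisted_charge lam mu q'"
      using g_in unfolding twisted_sub_def by blast
    have "fock_eval lam mu (\<lambda>v. a * f v + b * g v) vac
        = twisted_charge lam mu (\<lambda>M. a * q M + b * q' M)"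
      using fock_eval_lincomb[OF f(1) g(1)] f(3) g(3)
      by (simp add: fun_eq_iff twisted_charge_lincomb)
    moreover have "finite (supp (\<lambda>M. a * q M + b * q' M))"
      by (rule finite_subset[OF supp_lincomb_subset]) (simp add: f(2) g(2))
    ultimately show ?thesis
      using FA_lincomb[OF f(1) g(1)] unfolding twisted_sub_def by blast
  qed
  have "(\<lambda>v. 0) \<in> twisted_sub lam mu"
    using whitL_subset_twisted_sub whitL.weyl[OF weylJ.zero] by blast
  moreover have "fadd f g \<in> twisted_sub lam mu"
    if "f \<in> twisted_sub lam mu" "g \<in> twisted_sub lam mu" for f g
    using lincomb[OF that, of 1 1] by (simp add: fadd_def)
  moreover have "fscale c f \<in> twisted_sub lam mu" if "f \<in> twisted_sub lam mu" for c f
    using lincomb[OF that that, of c 0] by (simp add: fscale_def)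
  ultimately show ?thesis
    unfolding fsubspace_def by blast
qed

lemma Eact_twisted_sub:
  assumes fin: "finite (twist_supp lam mu)" and f: "f \<in> twisted_sub lam mu"
  shows "Eact i j f \<in> twisted_sub lam mu"
proof -
  obtain q where q: "f \<in> FA" "finite (supp q)" "fock_eval lam mu f vac = twisted_charge lam mu q"
    using f unfolding twisted_sub_def by blast
  obtain a b where ab: "charge_sign a + charge_sign b = 0"
    "\<And>p. fock_eval lam mu (Eact i j f) p
       = fock_act lam mu a (fock_act lam mu b (fock_eval lam mu f p))"
    using fock_eval_Eact[OF q(1)] by blast
  have "fock_eval lam mu (Eact i j f) vac
      = twisted_charge lam mu (fock_act lam mu a (fock_act lam mu b q))"
    using ab q(3) twisted_charge_fock_act_pair[OF fin ab(1)] by simp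
  then show ?thesis
    using FA_Eact[OF q(1)] finite_supp_fock_act[OF finite_supp_fock_act[OF q(2)]]
    unfolding twisted_sub_def by blast
qed

lemma mon_Nil_notin_twisted_sub:
  assumes "finite (twist_supp lam mu)" "v \<in> twist_supp lam mu"
  shows "mon [] \<notin> twisted_sub lam mu"
proof
  assume "mon [] \<in> twisted_sub lam mu"
  then obtain q where "finite (supp q)" "fock_eval lam mu (mon []) vac = twisted_charge lam mu q"
    unfolding twisted_sub_def by blast
  moreover have "fock_eval lam mu (mon []) vac = vac"
    by (simp add: fun_eq_iff fock_eval_mon)
  ultimately show False
    using twisted_charge_ne_vac[OF assms] by metis
qed

definition twist_elem :: "(nat \<Rightarrow> complex) \<Rightarrow> (nat \<Rightarrow> complex) \<Rightarrow> felem" where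
  "twist_elem lam mu = (\<lambda>w. - (\<Sum>u\<in>twist_supp lam mu. twist_coeff lam mu u * mon [u] w))"

lemma supp_twist_elem: "supp (twist_elem lam mu) \<subseteq> (\<lambda>u. [u]) ` twist_supp lam mu"
proof
  fix w assume "w \<in> supp (twist_elem lam mu)"
  then have "(\<Sum>u\<in>twist_supp lam mu. twist_coeff lam mu u * mon [u] w) \<noteq> 0"
    by (simp add: supp_def twist_elem_def)
  then obtain u where "u \<in> twist_supp lam mu" "mon [u] w \<noteq> 0"
    by (metis (no_types, lifting) mult_zero_right sum.neutral)
  then show "w \<in> (\<lambda>u. [u]) ` twist_supp lam mu"
    by (auto simp: mon_def split: if_splits)
qed

lemma fock_eval_twist_elem:
  assumes fin: "finite (twist_supp lam mu)"
  shows "fock_eval lam mu (twist_elem lam mu) vac = twisted_charge lam mu vac"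
proof
  fix M
  have coeff: "twist_elem lam mu [u] = - twist_coeff lam mu u" for u
  proof -
    have "mon [u'] [u] = (if u' = u then 1 else 0)" for u'
      by (auto simp: mon_def)
    then show ?thesis
      using sum_twist_supp_delta[OF fin, of u 1] by (simp add: twist_elem_def)
  qed
  have creation: "fock_act lam mu u vac = var_mult u vac" if "u \<in> twist_supp lam mu" for u
    using that by (cases u) (auto simp: twist_supp_def fock_act_def split: if_splits)
  have "fock_eval lam mu (twist_elem lam mu) vac M
      = (\<Sum>w\<in>(\<lambda>u. [u]) ` twist_supp lam mu. twist_elem lam mu w * fock_word lam mu w vac M)"
    using fin supp_twist_elem by (intro fock_eval_eq_sum) auto
  also have "\<dots> = (\<Sum>u\<in>twist_supp lam mu. - twist_coeff lam mu u * var_mult u vac M)"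
    by (subst sum.reindex) (auto simp: inj_on_def coeff creation intro!: sum.cong)
  also have "\<dots> = twisted_charge lam mu vac M"
    by (simp add: twisted_charge_def vac_def sum_negf)
  finally show "fock_eval lam mu (twist_elem lam mu) vac M = twisted_charge lam mu vac M" .
qed

lemma twist_elem_in_twisted_sub:
  "finite (twist_supp lam mu) \<Longrightarrow> twist_elem lam mu \<in> twisted_sub lam mu"
proof -
  assume fin: "finite (twist_supp lam mu)"
  have "finite (supp vac)"
    by (rule finite_subset[of _ "{{#}}"]) (auto simp: supp_def vac_def)
  moreover have "twist_elem lam mu \<in> FA"
    using fin by (intro FA_if_supp_subset[OF _ supp_twist_elem]) simp
  ultimately show ?thesis
    using fock_eval_twist_elem[OF fin] unfolding twisted_sub_def by blast
qed

lemma twist_elem_notin_whitL: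
  assumes fin: "finite (twist_supp lam mu)" and v: "v \<in> twist_supp lam mu"
  shows "twist_elem lam mu \<notin> whitL lam mu"
proof
  assume "twist_elem lam mu \<in> whitL lam mu"
  then have "twisted_charge lam mu vac {#v#} = 0"
    using fock_eval_whitL fock_eval_twist_elem[OF fin] by metis
  moreover have "var_mult u vac {#v#} = (if u = v then 1 else 0)" for u
    by (simp add: var_mult_def vac_def)
  moreover have "twist_coeff lam mu v \<noteq> 0"
    using v by (simp add: twist_supp_def)
  ultimately show False
    by (simp add: twisted_charge_def vac_def sum_twist_supp_delta[OF fin])
qed

theorem theorem6p3:
  fixes n m :: nat and lam mu :: "nat \<Rightarrow> complex"
  assumes "m \<ge> 1"
    and "\<forall>i>n. lam i = 0" and "\<forall>j>m. mu j = 0"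
    and "\<exists>i\<le>n. lam i \<noteq> 0" and "\<exists>j\<in>{1..m}. mu j \<noteq> 0"
  shows "cycsub lam mu = FA \<and>
         (\<exists>V. fsubspace V \<and> whitL lam mu \<subseteq> V \<and> V \<subseteq> FA \<and>
              (\<forall>i j. \<forall>f\<in>V. Eact i j f \<in> V) \<and>
              V \<noteq> whitL lam mu \<and> V \<noteq> FA)"
proof -
  have cyclic: "cycsub lam mu = FA"
    using assms(4,5) by (intro cycsub_eq_FA) auto
  obtain k where "lam k \<noteq> 0" using assms(4) by blast
  then have v: "As (- int k) \<in> twist_supp lam mu" by (simp add: twist_supp_def)
  have fin: "finite (twist_supp lam mu)" using finite_twist_supp[OF assms(2,3)] .
  let ?V = "twisted_sub lam mu"
  have "?V \<noteq> whitL lam mu"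
    using twist_elem_in_twisted_sub[OF fin] twist_elem_notin_whitL[OF fin v] by blast
  moreover have "?V \<noteq> FA"
    using mon_Nil_notin_twisted_sub[OF fin v] FA_mon by blast
  moreover have "?V \<subseteq> FA" by (auto simp: twisted_sub_def)
  ultimately show ?thesis
    using cyclic fsubspace_twisted_sub whitL_subset_twisted_sub Eact_twisted_sub[OF fin]
    by (intro conjI exI[of _ ?V] allI ballI) simp_all
qed

end
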